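(* Let $\Gamma$ be a group with a strictly decreasing sequence $\{\Gamma_n\}$ of finite-index normal subgroups with trivial intersection, $Z=\varprojlim\Gamma/\Gamma_n$ with the left translation action, $\pi_n:Z\to\Gamma/\Gamma_n$ the quotient maps, and for $n\ge2$ let $\gamma_n\in\Gamma_{n-1}\setminus\Gamma_n$ and $C_n=\pi_n^{-1}(\gamma_n\Gamma_n)$. Let $s_1,s_2\in\Gamma$ and $z,z'\in Z$ with $s_1z,s_2z\in C_n$ and $s_2z'\in C_m$ ($n,m\ge2$). Then $m=n$ if and only if $s_1z'\in C_n$.
   Context: $Z=\varprojlim\Gamma/\Gamma_n$ is the compact group of compatible sequences in $\prod_n\Gamma/\Gamma_n$, containing $\Gamma$ as a subgroup. (In the paper $\Gamma$ is a finitely generated nonabelian free group.) *)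

theory Defs
  imports "HOL-Algebra.Algebra"
begin

text \<open>Indices start at 1.  An element of the inverse limit
  Z = lim Gamma/Gamma_n is a sequence z indexed by n >= 1 with
  z n a coset of N n, compatible under the natural maps
  Gamma/Gamma_(n+1) -> Gamma/Gamma_n (i.e. z (Suc n) is contained in z n).\<close>

definition invlim :: "('a, 'b) monoid_scheme \<Rightarrow> (nat \<Rightarrow> 'a set) \<Rightarrow> (nat \<Rightarrow> 'a set) set" where
  "invlim G N = {z. z \<in> extensional {1..} \<and> (\<forall>n\<ge>1. z n \<in> rcosets\<^bsub>G\<^esub> (N n))
                    \<and> (\<forall>n\<ge>1. z (Suc n) \<subseteq> z n)}"

definition transl :: "('a, 'b) monoid_scheme \<Rightarrow> 'a \<Rightarrow> (nat \<Rightarrow> 'a set) \<Rightarrow> (nat \<Rightarrow> 'a set)" where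
  "transl G s z = restrict (\<lambda>n. s <#\<^bsub>G\<^esub> z n) {1..}"

definition proj :: "(nat \<Rightarrow> 'a set) \<Rightarrow> nat \<Rightarrow> 'a set" where
  "proj z n = z n"

definition cyl :: "('a, 'b) monoid_scheme \<Rightarrow> (nat \<Rightarrow> 'a set) \<Rightarrow> (nat \<Rightarrow> 'a) \<Rightarrow> nat \<Rightarrow> (nat \<Rightarrow> 'a set) set" where
  "cyl G N \<gamma> n = {z \<in> invlim G N. proj z n = \<gamma> n <#\<^bsub>G\<^esub> N n}"

end

(* Left translation by s acts on each level G/N_n of the inverse limit as multiplication
   by the coset N_n s in the quotient group.  So if s1 and s2 move one point of G/N_n to the
   same place, they act identically on all of G/N_n; in particular s1 z' and s2 z' lie in the
   same cylinders C_n.  The theorem then reduces to the pairwise disjointness of the C_n. *)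

theory Submission
  imports Defs
begin

lemma (in normal) l_coset_eq_rcos_set_mult:
  assumes "s \<in> carrier G" "C \<in> rcosets H"
  shows "s <# C = (H #> s) <#> C"
proof -
  obtain y where y: "y \<in> carrier G" "C = H #> y"
    using assms(2) unfolding RCOSETS_def by blast
  have "s <# (H #> y) = (s <# H) #> y"
    using assms(1) y(1) subset by (rule coset_assoc)
  also have "s <# H = H #> s"
    using assms(1) by (simp add: coset_eq)
  also have "(H #> s) #> y = H #> (s \<otimes> y)"
    using assms(1) y(1) by (simp add: coset_mult_assoc subset)
  also have "\<dots> = (H #> s) <#> (H #> y)"
    using assms(1) y(1) by (simp add: rcos_sum)
  finally show ?thesis using y(2) by simp
qed

lemma (in normal) l_coset_in_rcosets:
  assumes "s \<in> carrier G" "C \<in> rcosets H"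
  shows "s <# C \<in> rcosets H"
  using assms by (simp add: l_coset_eq_rcos_set_mult setmult_closed rcosetsI subset)

lemma (in normal) l_coset_eq_transfer:
  assumes "s1 \<in> carrier G" "s2 \<in> carrier G" "C \<in> rcosets H" "C' \<in> rcosets H"
    and "s1 <# C = s2 <# C"
  shows "s1 <# C' = s2 <# C'"
proof -
  interpret Mod: group "G Mod H" by (rule factorgroup_is_group)
  have cosets: "H #> s1 \<in> carrier (G Mod H)" "H #> s2 \<in> carrier (G Mod H)"
    using assms(1,2) by (simp_all add: FactGroup_def rcosetsI subset)
  have carrier: "C \<in> carrier (G Mod H)" "C' \<in> carrier (G Mod H)"
    using assms(3,4) by (simp_all add: FactGroup_def)
  have "(H #> s1) \<otimes>\<^bsub>G Mod H\<^esub> C = (H #> s2) \<otimes>\<^bsub>G Mod H\<^esub> C"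
    using assms(1-3,5) by (simp add: l_coset_eq_rcos_set_mult)
  then have "H #> s1 = H #> s2"
    using Mod.r_cancel cosets carrier(1) by blast
  then show ?thesis
    using assms(1,2,4) by (simp add: l_coset_eq_rcos_set_mult)
qed

lemma (in group) lcos_self:
  assumes "x \<in> carrier G" "subgroup H G"
  shows "x \<in> x <# H"
  using assms subgroup.one_closed unfolding l_coset_def by force

lemma (in group) l_coset_subset_imp_mem:
  assumes "subgroup H G" "subgroup K G" "x \<in> carrier G" "y \<in> carrier G"
    and "y <# K \<subseteq> x <# H" "y \<in> H"
  shows "x \<in> H"
proof -
  have "y \<in> x <# H" using assms(2,4,5) lcos_self by blast
  then have "x <# H = H"
    using assms(1,3,4,6) l_repr_independence coset_join3 by metis
  then show ?thesis using assms(1,3) lcos_self by blast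
qed

lemma chain_antimono:
  assumes "\<And>k. k \<ge> 1 \<Longrightarrow> A (Suc k) \<subseteq> A k" "1 \<le> i" "i \<le> j"
  shows "A j \<subseteq> A i"
  using assms(3)
proof (induction j rule: dec_induct)
  case base
  then show ?case by simp
next
  case (step k)
  then show ?case using assms(1)[of k] assms(2) by auto
qed

lemma invlim_antimono:
  assumes "z \<in> invlim G N" "1 \<le> i" "i \<le> j"
  shows "z j \<subseteq> z i"
proof -
  have "z (Suc k) \<subseteq> z k" if "k \<ge> 1" for k
    using assms(1) that unfolding invlim_def by blast
  then show ?thesis using assms(2,3) by (rule chain_antimono)
qed

lemma transl_apply:
  assumes "k \<ge> 1"
  shows "transl G s z k = s <#\<^bsub>G\<^esub> z k"
  using assms unfolding transl_def by simp

lemma transl_in_invlim: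
  assumes normal: "\<And>k. k \<ge> 1 \<Longrightarrow> N k \<lhd> G"
    and "s \<in> carrier G" "z \<in> invlim G N"
  shows "transl G s z \<in> invlim G N"
  unfolding invlim_def
proof (intro CollectI conjI allI impI)
  show "transl G s z \<in> extensional {1..}"
    unfolding transl_def by simp
next
  fix k :: nat
  assume k: "k \<ge> 1"
  have "z k \<in> rcosets\<^bsub>G\<^esub> (N k)"
    using assms(3) k unfolding invlim_def by blast
  then show "transl G s z k \<in> rcosets\<^bsub>G\<^esub> (N k)"
    using normal.l_coset_in_rcosets[OF normal[OF k] assms(2)] k by (simp add: transl_apply)
next
  fix k :: nat
  assume k: "k \<ge> 1"
  have "z (Suc k) \<subseteq> z k"
    using assms(3) k unfolding invlim_def by blast
  then show "transl G s z (Suc k) \<subseteq> transl G s z k"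
    using k by (auto simp: transl_apply l_coset_def)
qed

lemma transl_eq_transfer:
  assumes "N k \<lhd> G" "k \<ge> 1" "s1 \<in> carrier G" "s2 \<in> carrier G"
    and "z \<in> invlim G N" "z' \<in> invlim G N"
    and "transl G s1 z k = transl G s2 z k"
  shows "transl G s1 z' k = transl G s2 z' k"
proof -
  have cosets: "z k \<in> rcosets\<^bsub>G\<^esub> (N k)" "z' k \<in> rcosets\<^bsub>G\<^esub> (N k)"
    using assms(2,5,6) unfolding invlim_def by auto
  have "s1 <#\<^bsub>G\<^esub> z k = s2 <#\<^bsub>G\<^esub> z k"
    using assms(2,7) by (simp add: transl_apply)
  then have "s1 <#\<^bsub>G\<^esub> z' k = s2 <#\<^bsub>G\<^esub> z' k"
    by (rule normal.l_coset_eq_transfer[OF assms(1,3,4) cosets])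
  then show ?thesis
    using assms(2) by (simp add: transl_apply)
qed

lemma transl_cyl_transfer:
  assumes normal: "\<And>k. k \<ge> 1 \<Longrightarrow> N k \<lhd> G" and "n \<ge> 1"
    and "s1 \<in> carrier G" "s2 \<in> carrier G" "z \<in> invlim G N" "z' \<in> invlim G N"
    and "transl G s1 z \<in> cyl G N \<gamma> n" "transl G s2 z \<in> cyl G N \<gamma> n"
  shows "transl G s1 z' \<in> cyl G N \<gamma> n \<longleftrightarrow> transl G s2 z' \<in> cyl G N \<gamma> n"
proof -
  have "transl G s1 z n = transl G s2 z n"
    using assms(7,8) unfolding cyl_def proj_def by simp
  then have "transl G s1 z' n = transl G s2 z' n"
    by (rule transl_eq_transfer[OF normal[OF assms(2)] assms(2-6)])
  moreover have "transl G s1 z' \<in> invlim G N" "transl G s2 z' \<in> invlim G N"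
    using transl_in_invlim[of N G, OF normal] assms(3,4,6) by blast+
  ultimately show ?thesis
    unfolding cyl_def proj_def by simp
qed

text \<open>The cylinders \<open>C\<^sub>n\<close> are pairwise disjoint: for \<open>i < j\<close> the coset \<open>\<gamma>\<^sub>j N\<^sub>j\<close>
  lies in \<open>N\<^sub>i\<close>, whereas \<open>\<gamma>\<^sub>i N\<^sub>i\<close> does not meet \<open>N\<^sub>i\<close>.\<close>

lemma cyl_disjoint:
  fixes G (structure)
  assumes "group G"
    and subgroup: "\<And>k. k \<ge> 1 \<Longrightarrow> subgroup (N k) G"
    and decr: "\<And>k. k \<ge> 1 \<Longrightarrow> N (Suc k) \<subseteq> N k"
    and gamma: "\<And>k. k \<ge> 2 \<Longrightarrow> \<gamma> k \<in> N (k - 1) - N k"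
    and "w \<in> cyl G N \<gamma> i" "w \<in> cyl G N \<gamma> j" "i \<ge> 2" "j \<ge> 2"
  shows "i = j"
proof -
  interpret group G by fact
  have gamma_carrier: "\<gamma> k \<in> carrier G" if "k \<ge> 2" for k
  proof -
    have "N (k - 1) \<subseteq> carrier G"
      using subgroup.subset[OF subgroup[of "k - 1"]] that by simp
    then show ?thesis using gamma[OF that] by blast
  qed
  have not_less: False
    if "w \<in> cyl G N \<gamma> i" "w \<in> cyl G N \<gamma> j" "2 \<le> i" "i < j" for i j
  proof -
    have i1: "i \<ge> 1" and j1: "j \<ge> 1" and j2: "j \<ge> 2"
      using that(3,4) by auto
    have "w \<in> invlim G N" "w i = \<gamma> i <# N i" "w j = \<gamma> j <# N j"
      using that(1,2) unfolding cyl_def proj_def by auto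
    then have "\<gamma> j <# N j \<subseteq> \<gamma> i <# N i"
      using invlim_antimono[of w G N i j] that(3,4) by simp
    moreover have "\<gamma> j \<in> N i"
    proof -
      have "N (j - 1) \<subseteq> N i"
        using chain_antimono[of N i "j - 1", OF decr] that(3,4) by simp
      then show ?thesis using gamma[OF j2] by blast
    qed
    ultimately have "\<gamma> i \<in> N i"
      using l_coset_subset_imp_mem[OF subgroup[OF i1] subgroup[OF j1]
          gamma_carrier[OF that(3)] gamma_carrier[OF j2]] by blast
    then show False using gamma[OF that(3)] by blast
  qed
  have "\<not> i < j" "\<not> j < i"
    using not_less[OF assms(5,6,7)] not_less[OF assms(6,5,8)] by auto
  then show ?thesis by simp
qed

text \<open>The finite-index and trivial-intersection hypotheses are not needed.\<close>

theorem lemma5p8: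
  fixes G :: "('a, 'b) monoid_scheme" and N :: "nat \<Rightarrow> 'a set" and \<gamma> :: "nat \<Rightarrow> 'a"
  assumes "group G"
    and normal: "\<And>n. n \<ge> 1 \<Longrightarrow> N n \<lhd> G"
    and fin_index: "\<And>n. n \<ge> 1 \<Longrightarrow> finite (rcosets\<^bsub>G\<^esub> (N n))"
    and strict_decr: "\<And>n. n \<ge> 1 \<Longrightarrow> N (Suc n) \<subset> N n"
    and trivial_inter: "(\<Inter>n\<in>{1..}. N n) = {\<one>\<^bsub>G\<^esub>}"
    and gamma: "\<And>k. k \<ge> 2 \<Longrightarrow> \<gamma> k \<in> N (k - 1) - N k"
    and "s1 \<in> carrier G" "s2 \<in> carrier G"
    and "z \<in> invlim G N" "z' \<in> invlim G N"
    and "n \<ge> 2" "m \<ge> 2"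
    and "transl G s1 z \<in> cyl G N \<gamma> n" "transl G s2 z \<in> cyl G N \<gamma> n"
    and "transl G s2 z' \<in> cyl G N \<gamma> m"
  shows "m = n \<longleftrightarrow> transl G s1 z' \<in> cyl G N \<gamma> n"
proof -
  have transfer: "transl G s1 z' \<in> cyl G N \<gamma> n \<longleftrightarrow> transl G s2 z' \<in> cyl G N \<gamma> n"
    using assms(7-11,13,14) by (intro transl_cyl_transfer[OF normal]) auto
  have decr: "N (Suc k) \<subseteq> N k" if "k \<ge> 1" for k
    using strict_decr[OF that] by blast
  have subgroup: "subgroup (N k) G" if "k \<ge> 1" for k
    using normal[OF that] normal_imp_subgroup by blast
  have "m = n" if "transl G s2 z' \<in> cyl G N \<gamma> n"
    using cyl_disjoint[OF assms(1) subgroup decr gamma assms(15) that assms(12,11)] .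
  then show ?thesis
    using transfer assms(15) by blast
qed

end
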